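(* Let $R$ be a unital associative ring, $n=3$, and let $\Omega$ be $\Phi^k$ or $\Psi^k$ for some integer $k$. For $$A=\begin{pmatrix}1&1&1\\1&a&b\\1&c&d\end{pmatrix}\in{\rm dom}(\Omega)\quad\text{write}\quad \Omega(A)=\begin{pmatrix}1&1&1\\1&\alpha&\beta\\1&\gamma&\delta\end{pmatrix},$$ so that $\alpha,\beta,\gamma,\delta$ are functions of $(a,b,c,d)$, and write $\alpha=f(a,b,c,d)$. Then ${\rm dom}(\Omega)$ is invariant under the permutations $(a,b,c,d)\mapsto(b,a,d,c)$, $(c,d,a,b)$, $(d,c,b,a)$ of the entries, and $$\beta=f(b,a,d,c),\quad\gamma=f(c,d,a,b),\quad\delta=f(d,c,b,a).$$
   Context: $R^*$: units of $R$. $M_3^*(R)$: invertible $3\times3$ matrices; $M_3^\star(R)$: matrices with all entries in $R^*$. $J_1(M)=M^{-1}$ on $M_3^*(R)$; $J_2(M)_{jk}=(M_{kj})^{-1}$ on $M_3^\star(R)$; $J=J_2\circ J_1$, $J^{-1}=J_1\circ J_2$, where $g\circ f$ has domain $\{x\in{\rm dom}(f):f(x)\in{\rm dom}(g)\}$. $\widehat M_3(R)$: matrices whose first row and column consist of $1$'s. For $A=\{a_{j,k}\}\in M_3^\star(R)$: $\Lambda^L(A)_{j,k}=a_{1,1}a_{j,1}^{-1}a_{j,k}a_{1,k}^{-1}$, $\Lambda^R(A)_{j,k}=a_{j,1}^{-1}a_{j,k}a_{1,k}^{-1}a_{1,1}$. $\Phi(A)=J_2(\Lambda^L(A^{-1}))$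 with ${\rm dom}(\Phi)={\rm dom}(J)\cap\widehat M_3(R)\cap M_3^\star(R)$; its inverse is $\Phi^{-1}(A)=\Lambda^R(J^{-1}(A))$ with domain $\widehat M_3(R)\cap\{M\in{\rm dom}(J^{-1}):J^{-1}(M)\in M_3^\star(R)\}$. $\Psi=J_2\circ\Phi\circ J_2$, with inverse $J_2\circ\Phi^{-1}\circ J_2$. Integer powers are iterated compositions (negative powers using the inverse maps) with natural domains. *)

theory Defs
  imports "HOL-Analysis.Analysis" "HOL-Library.Numeral_Type"
begin

text \<open>The paper's indices 1,2,3 correspond to the elements 0,1,2 of the index type 3.
  Partial maps are modelled as option-valued functions; composition with natural
  domain is map composition.\<close>

type_synonym 'a mat3 = "'a^3^3"

definition unitR :: "'a::ring_1 \<Rightarrow> bool" where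
  "unitR x \<longleftrightarrow> (\<exists>y. x * y = 1 \<and> y * x = 1)"

definition uinv :: "'a::ring_1 \<Rightarrow> 'a" where
  "uinv x = (SOME y. x * y = 1 \<and> y * x = 1)"

definition allunits :: "'a::ring_1 mat3 \<Rightarrow> bool" where
  "allunits M \<longleftrightarrow> (\<forall>j k. unitR (M$j$k))"

definition hatM :: "'a::ring_1 mat3 \<Rightarrow> bool" where
  "hatM M \<longleftrightarrow> (\<forall>j. M$0$j = 1 \<and> M$j$0 = 1)"

definition J1 :: "'a::ring_1 mat3 \<Rightarrow> 'a mat3 option" where
  "J1 M = (if invertible M then Some (matrix_inv M) else None)"

definition J2 :: "'a::ring_1 mat3 \<Rightarrow> 'a mat3 option" where
  "J2 M = (if allunits M then Some (\<chi> j k. uinv (M$k$j)) else None)"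

definition J :: "'a::ring_1 mat3 \<Rightarrow> 'a mat3 option" where
  "J = J2 \<circ>\<^sub>m J1"

definition Jinv :: "'a::ring_1 mat3 \<Rightarrow> 'a mat3 option" where
  "Jinv = J1 \<circ>\<^sub>m J2"

definition LamL :: "'a::ring_1 mat3 \<Rightarrow> 'a mat3" where
  "LamL A = (\<chi> j k. A$0$0 * uinv (A$j$0) * A$j$k * uinv (A$0$k))"

definition LamR :: "'a::ring_1 mat3 \<Rightarrow> 'a mat3" where
  "LamR A = (\<chi> j k. uinv (A$j$0) * A$j$k * uinv (A$0$k) * A$0$0)"

definition Phi :: "'a::ring_1 mat3 \<Rightarrow> 'a mat3 option" where
  "Phi A = (if A \<in> dom J \<and> hatM A \<and> allunits A
            then J2 (LamL (matrix_inv A)) else None)"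

definition PhiInv :: "'a::ring_1 mat3 \<Rightarrow> 'a mat3 option" where
  "PhiInv A = (if hatM A then
                 (case Jinv A of None \<Rightarrow> None
                  | Some M \<Rightarrow> if allunits M then Some (LamR M) else None)
               else None)"

definition Psi :: "'a::ring_1 mat3 \<Rightarrow> 'a mat3 option" where
  "Psi = J2 \<circ>\<^sub>m Phi \<circ>\<^sub>m J2"

definition PsiInv :: "'a::ring_1 mat3 \<Rightarrow> 'a mat3 option" where
  "PsiInv = J2 \<circ>\<^sub>m PhiInv \<circ>\<^sub>m J2"

definition mpow :: "('b \<Rightarrow> 'b option) \<Rightarrow> ('b \<Rightarrow> 'b option) \<Rightarrow> int \<Rightarrow> 'b \<Rightarrow> 'b option" where
  "mpow f g k = (if 0 \<le> k then ((\<lambda>h. f \<circ>\<^sub>m h) ^^ nat k) Some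
                 else ((\<lambda>h. g \<circ>\<^sub>m h) ^^ nat (- k)) Some)"

definition Hm :: "'a::ring_1 \<Rightarrow> 'a \<Rightarrow> 'a \<Rightarrow> 'a \<Rightarrow> 'a mat3" where
  "Hm a b c d = (\<chi> j k. if j = 0 \<or> k = 0 then 1
                        else if j = 1 then (if k = 1 then a else b)
                        else (if k = 1 then c else d))"

end

theory Submission
  imports Defs
begin

text \<open>Permuting the rows of a matrix by \<open>p\<close> and its columns by \<open>q\<close>, where \<open>p\<close> and \<open>q\<close>
  fix the first index, commutes with \<open>\<Lambda>\<^sup>L\<close>, \<open>\<Lambda>\<^sup>R\<close> and the conditions defining the domains,
  while \<open>J\<^sub>1\<close> and \<open>J\<^sub>2\<close> exchange the roles of \<open>p\<close> and \<open>q\<close>. Since every map in sight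
  uses \<open>J\<^sub>1\<close> and \<open>J\<^sub>2\<close> an even number of times, \<open>\<Phi>\<close>, \<open>\<Psi>\<close> and all their integer powers
  commute with such permutations. Swapping the second and third rows and/or columns of
  \<open>Hm a b c d\<close> gives the three permuted matrices of the statement, and the images, again of
  the form \<open>Hm\<close>, are permuted in the same way.\<close>

definition permute_mat :: "('m \<Rightarrow> 'm) \<Rightarrow> ('n \<Rightarrow> 'n) \<Rightarrow> 'a^'n^'m \<Rightarrow> 'a^'n^'m" where
  "permute_mat p q A = (\<chi> i j. A $ p i $ q j)"

lemma permute_mat_nth [simp]: "permute_mat p q A $ i $ j = A $ p i $ q j"
  by (simp add: permute_mat_def)

lemma permute_mat_inv_cancel:
  assumes "bij p" "bij q"
  shows "permute_mat (inv p) (inv q) (permute_mat p q A) = A"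
  using assms by (simp add: vec_eq_iff bij_is_surj surj_f_inv_f)

lemma permute_mat_mult:
  fixes A :: "'a::semiring_1^'n^'m" and B :: "'a^'k^'n"
  assumes "bij q"
  shows "permute_mat p q A ** permute_mat q r B = permute_mat p r (A ** B)"
proof -
  have "(\<Sum>l\<in>UNIV. A $ p i $ q l * B $ q l $ r j) = (\<Sum>l\<in>UNIV. A $ p i $ l * B $ l $ r j)"
    for i j using sum.reindex[of q UNIV "\<lambda>l. A $ p i $ l * B $ l $ r j"] assms
    by (simp add: bij_def)
  then show ?thesis by (simp add: vec_eq_iff matrix_matrix_mult_def)
qed

lemma permute_mat_mat_1:
  "inj p \<Longrightarrow> permute_mat p p (mat 1 :: 'a::semiring_1^'n^'n) = mat 1"
  by (simp add: vec_eq_iff mat_def inj_eq)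

lemma matrix_inv_eqI:
  fixes A :: "'a::semiring_1^'n^'m"
  assumes "A ** X = mat 1" "X ** A = mat 1"
  shows "invertible A" "matrix_inv A = X"
proof -
  show inv: "invertible A" using assms unfolding invertible_def by blast
  have "Y = X" if "A ** Y = mat 1 \<and> Y ** A = mat 1" for Y
    by (metis assms(1) that matrix_mul_assoc matrix_mul_lid matrix_mul_rid)
  then show "matrix_inv A = X"
    unfolding matrix_inv_def using assms by blast
qed

lemma matrix_inv_mult:
  fixes A :: "'a::semiring_1^'n^'m"
  assumes "invertible A"
  shows "A ** matrix_inv A = mat 1" "matrix_inv A ** A = mat 1"
  using someI_ex[OF assms[unfolded invertible_def]] by (simp_all add: matrix_inv_def)

lemma
  fixes A :: "'a::semiring_1^'n^'m"
  assumes "bij p" "bij q" "invertible A"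
  shows invertible_permute_mat: "invertible (permute_mat p q A)"
    and matrix_inv_permute_mat: "matrix_inv (permute_mat p q A) = permute_mat q p (matrix_inv A)"
proof -
  have "permute_mat p q A ** permute_mat q p (matrix_inv A) = mat 1"
    "permute_mat q p (matrix_inv A) ** permute_mat p q A = mat 1"
    using assms by (simp_all add: permute_mat_mult matrix_inv_mult permute_mat_mat_1 bij_is_inj)
  then show "invertible (permute_mat p q A)"
    "matrix_inv (permute_mat p q A) = permute_mat q p (matrix_inv A)"
    by (rule matrix_inv_eqI)+
qed

lemma invertible_permute_mat_iff:
  fixes A :: "'a::semiring_1^'n^'m"
  assumes "bij p" "bij q"
  shows "invertible (permute_mat p q A) \<longleftrightarrow> invertible A"
  using invertible_permute_mat[OF assms] invertible_permute_mat[OF bij_imp_bij_inv bij_imp_bij_inv]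
    permute_mat_inv_cancel[OF assms] assms by metis

definition zero_fixing_perm :: "('n::zero \<Rightarrow> 'n) \<Rightarrow> bool" where
  "zero_fixing_perm p \<longleftrightarrow> bij p \<and> p 0 = 0"

definition perm_equivariant ::
    "((('a, 'n::{finite,zero}) vec, 'n) vec \<Rightarrow> (('a, 'n) vec, 'n) vec option) \<Rightarrow> bool" where
  "perm_equivariant f \<longleftrightarrow> (\<forall>p q A. zero_fixing_perm p \<longrightarrow> zero_fixing_perm q \<longrightarrow>
     f (permute_mat p q A) = map_option (permute_mat p q) (f A))"

definition perm_transposing ::
    "((('a, 'n::{finite,zero}) vec, 'n) vec \<Rightarrow> (('a, 'n) vec, 'n) vec option) \<Rightarrow> bool" where
  "perm_transposing f \<longleftrightarrow> (\<forall>p q A. zero_fixing_perm p \<longrightarrow> zero_fixing_perm q \<longrightarrow>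
     f (permute_mat p q A) = map_option (permute_mat q p) (f A))"

lemma perm_equivariant_Some: "perm_equivariant Some"
  by (simp add: perm_equivariant_def)

lemma perm_equivariant_map_comp:
  "perm_equivariant f \<Longrightarrow> perm_equivariant g \<Longrightarrow> perm_equivariant (f \<circ>\<^sub>m g)"
  unfolding perm_equivariant_def map_comp_def by (auto split: option.split)

lemma perm_equivariant_map_comp_transposing:
  "perm_transposing f \<Longrightarrow> perm_transposing g \<Longrightarrow> perm_equivariant (f \<circ>\<^sub>m g)"
  unfolding perm_equivariant_def perm_transposing_def map_comp_def by (auto split: option.split)

lemma perm_transposing_map_comp:
  "perm_transposing f \<Longrightarrow> perm_equivariant g \<Longrightarrow> perm_transposing (f \<circ>\<^sub>m g)"
  unfolding perm_equivariant_def perm_transposing_def map_comp_def by (auto split: option.split)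

lemma perm_equivariant_dom:
  "perm_equivariant f \<Longrightarrow> zero_fixing_perm p \<Longrightarrow> zero_fixing_perm q \<Longrightarrow>
    permute_mat p q A \<in> dom f \<longleftrightarrow> A \<in> dom f"
  unfolding perm_equivariant_def by auto

lemma mpow_closed:
  assumes "P Some" "\<And>h. P h \<Longrightarrow> P (f \<circ>\<^sub>m h)" "\<And>h. P h \<Longrightarrow> P (g \<circ>\<^sub>m h)"
  shows "P (mpow f g k)"
proof -
  have "P (((\<lambda>h. u \<circ>\<^sub>m h) ^^ n) Some)" if "\<And>h. P h \<Longrightarrow> P (u \<circ>\<^sub>m h)" for u n
    by (induction n) (simp_all add: assms(1) that)
  then show ?thesis using assms(2,3) by (simp add: mpow_def)
qed

lemma allunits_permute_mat:
  "bij p \<Longrightarrow> bij q \<Longrightarrow> allunits (permute_mat p q A) \<longleftrightarrow> allunits A"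
  unfolding allunits_def by (metis bij_is_surj permute_mat_nth surj_f_inv_f)

lemma hatM_permute_mat:
  "zero_fixing_perm p \<Longrightarrow> zero_fixing_perm q \<Longrightarrow> hatM (permute_mat p q A) \<longleftrightarrow> hatM A"
  unfolding hatM_def zero_fixing_perm_def by (metis bij_is_surj permute_mat_nth surj_f_inv_f)

lemma LamL_permute_mat:
  "zero_fixing_perm p \<Longrightarrow> zero_fixing_perm q \<Longrightarrow> LamL (permute_mat p q A) = permute_mat p q (LamL A)"
  unfolding zero_fixing_perm_def LamL_def by (simp add: vec_eq_iff)

lemma LamR_permute_mat:
  "zero_fixing_perm p \<Longrightarrow> zero_fixing_perm q \<Longrightarrow> LamR (permute_mat p q A) = permute_mat p q (LamR A)"
  unfolding zero_fixing_perm_def LamR_def by (simp add: vec_eq_iff)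

lemma perm_transposing_J1: "perm_transposing J1"
  unfolding perm_transposing_def zero_fixing_perm_def J1_def
  by (auto simp: invertible_permute_mat_iff matrix_inv_permute_mat)

lemma perm_transposing_J2: "perm_transposing J2"
  unfolding perm_transposing_def zero_fixing_perm_def J2_def
  by (auto simp: allunits_permute_mat vec_eq_iff)

lemma perm_equivariant_J: "perm_equivariant J"
  unfolding J_def
  by (rule perm_equivariant_map_comp_transposing[OF perm_transposing_J2 perm_transposing_J1])

lemma perm_equivariant_Jinv: "perm_equivariant Jinv"
  unfolding Jinv_def
  by (rule perm_equivariant_map_comp_transposing[OF perm_transposing_J1 perm_transposing_J2])

lemma invertible_if_in_dom_J: "A \<in> dom J \<Longrightarrow> invertible A"
  unfolding J_def J1_def map_comp_def by (auto split: if_splits)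

lemma perm_equivariant_Phi: "perm_equivariant Phi"
  unfolding perm_equivariant_def
proof (intro allI impI)
  fix p q :: "3 \<Rightarrow> 3" and A :: "'a mat3"
  assume pq: "zero_fixing_perm p" "zero_fixing_perm q"
  have cond: "permute_mat p q A \<in> dom J \<and> hatM (permute_mat p q A) \<and> allunits (permute_mat p q A)
      \<longleftrightarrow> A \<in> dom J \<and> hatM A \<and> allunits A"
    using pq perm_equivariant_dom[OF perm_equivariant_J] hatM_permute_mat allunits_permute_mat
    unfolding zero_fixing_perm_def by blast
  show "Phi (permute_mat p q A) = map_option (permute_mat p q) (Phi A)"
  proof (cases "A \<in> dom J \<and> hatM A \<and> allunits A")
    case True
    then have "matrix_inv (permute_mat p q A) = permute_mat q p (matrix_inv A)"
      using pq invertible_if_in_dom_J matrix_inv_permute_mat unfolding zero_fixing_perm_def by blast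
    then have "J2 (LamL (matrix_inv (permute_mat p q A))) = J2 (permute_mat q p (LamL (matrix_inv A)))"
      using pq by (simp add: LamL_permute_mat)
    also have "\<dots> = map_option (permute_mat p q) (J2 (LamL (matrix_inv A)))"
      using perm_transposing_J2 pq unfolding perm_transposing_def by blast
    finally show ?thesis using True cond by (simp add: Phi_def)
  next
    case False
    moreover from False cond
    have "\<not> (permute_mat p q A \<in> dom J \<and> hatM (permute_mat p q A) \<and> allunits (permute_mat p q A))"
      by blast
    ultimately show ?thesis unfolding Phi_def by (simp only: if_False if_not_P option.map)
  qed
qed

lemma perm_equivariant_PhiInv: "perm_equivariant PhiInv"
  unfolding perm_equivariant_def
proof (intro allI impI)
  fix p q :: "3 \<Rightarrow> 3" and A :: "'a mat3"
  assume pq: "zero_fixing_perm p" "zero_fixing_perm q"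
  then have "Jinv (permute_mat p q A) = map_option (permute_mat p q) (Jinv A)"
    using perm_equivariant_Jinv unfolding perm_equivariant_def by blast
  with pq show "PhiInv (permute_mat p q A) = map_option (permute_mat p q) (PhiInv A)"
    unfolding PhiInv_def
    by (auto simp: hatM_permute_mat allunits_permute_mat LamR_permute_mat zero_fixing_perm_def
        split: option.split)
qed

lemma perm_equivariant_Psi: "perm_equivariant Psi"
  unfolding Psi_def
  by (intro perm_equivariant_map_comp_transposing perm_transposing_map_comp
      perm_transposing_J2 perm_equivariant_Phi)

lemma perm_equivariant_PsiInv: "perm_equivariant PsiInv"
  unfolding PsiInv_def
  by (intro perm_equivariant_map_comp_transposing perm_transposing_map_comp
      perm_transposing_J2 perm_equivariant_PhiInv)

lemma perm_equivariant_mpow: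
  "perm_equivariant f \<Longrightarrow> perm_equivariant g \<Longrightarrow> perm_equivariant (mpow f g k)"
  by (rule mpow_closed) (simp_all add: perm_equivariant_Some perm_equivariant_map_comp)

definition preserves_hatM :: "('a::ring_1 mat3 \<Rightarrow> 'a mat3 option) \<Rightarrow> bool" where
  "preserves_hatM f \<longleftrightarrow> (\<forall>A B. hatM A \<longrightarrow> f A = Some B \<longrightarrow> hatM B)"

lemma preserves_hatM_Some: "preserves_hatM Some"
  by (simp add: preserves_hatM_def)

lemma preserves_hatM_map_comp:
  "preserves_hatM f \<Longrightarrow> preserves_hatM g \<Longrightarrow> preserves_hatM (f \<circ>\<^sub>m g)"
  unfolding preserves_hatM_def map_comp_Some_iff by blast

lemma preserves_hatM_mpow:
  "preserves_hatM f \<Longrightarrow> preserves_hatM g \<Longrightarrow> preserves_hatM (mpow f g k)"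
  by (rule mpow_closed) (simp_all add: preserves_hatM_Some preserves_hatM_map_comp)

lemma unitR_uinv: "unitR x \<Longrightarrow> x * uinv x = 1 \<and> uinv x * x = 1"
  unfolding unitR_def uinv_def by (rule someI_ex)

lemma uinv_1 [simp]: "uinv 1 = 1"
  unfolding uinv_def by (rule some_equality) auto

lemma mult_uinv_cancel_right: "unitR u \<Longrightarrow> x * uinv u * u = x"
  by (metis mult.assoc mult_1_right unitR_uinv)

lemma mult_mult_uinv_cancel_right: "unitR u \<Longrightarrow> x * u * uinv u = x"
  by (metis mult.assoc mult_1_right unitR_uinv)

lemma hatM_LamL: "allunits A \<Longrightarrow> hatM (LamL A)"
  unfolding hatM_def LamL_def allunits_def
  by (simp add: mult_uinv_cancel_right mult_mult_uinv_cancel_right unitR_uinv)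

lemma hatM_LamR: "allunits A \<Longrightarrow> hatM (LamR A)"
  unfolding hatM_def LamR_def allunits_def
  by (simp add: mult_uinv_cancel_right mult_mult_uinv_cancel_right unitR_uinv)

lemma preserves_hatM_J2: "preserves_hatM J2"
  unfolding preserves_hatM_def J2_def hatM_def by (auto split: if_splits)

lemma preserves_hatM_Phi: "preserves_hatM Phi"
  unfolding preserves_hatM_def
proof (intro allI impI)
  fix A B :: "'a mat3"
  assume "Phi A = Some B"
  then have "A \<in> dom J" and B: "J2 (LamL (matrix_inv A)) = Some B"
    by (auto simp: Phi_def split: if_splits)
  then have "allunits (matrix_inv A)"
    unfolding J_def J1_def J2_def map_comp_def by (auto split: if_splits)
  with B show "hatM B"
    using hatM_LamL preserves_hatM_J2 unfolding preserves_hatM_def by blast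
qed

lemma preserves_hatM_PhiInv: "preserves_hatM PhiInv"
  unfolding preserves_hatM_def PhiInv_def
  by (auto simp: hatM_LamR split: if_splits option.splits)

lemma preserves_hatM_Psi: "preserves_hatM Psi"
  unfolding Psi_def by (intro preserves_hatM_map_comp preserves_hatM_J2 preserves_hatM_Phi)

lemma preserves_hatM_PsiInv: "preserves_hatM PsiInv"
  unfolding PsiInv_def by (intro preserves_hatM_map_comp preserves_hatM_J2 preserves_hatM_PhiInv)

lemma hatM_Hm: "hatM (Hm a b c d)"
  by (simp add: hatM_def Hm_def)

lemma forall_3_from_0: "(\<forall>i::3. P i) \<longleftrightarrow> P 0 \<and> P 1 \<and> P 2"
proof -
  have "(3::3) = 0" by simp
  then show ?thesis unfolding forall_3 by (simp only:) blast
qed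

lemma hatM_imp_eq_Hm:
  assumes "hatM M"
  shows "M = Hm (M$1$1) (M$1$2) (M$2$1) (M$2$2)"
  using assms by (simp add: vec_eq_iff forall_3_from_0 Hm_def hatM_def)

abbreviation swap23 :: "3 \<Rightarrow> 3" where
  "swap23 \<equiv> Transposition.transpose 1 2"

lemma zero_fixing_perm_id: "zero_fixing_perm id"
  by (simp add: zero_fixing_perm_def)

lemma zero_fixing_perm_swap23: "zero_fixing_perm swap23"
  by (simp add: zero_fixing_perm_def)

lemma permute_mat_swap23_Hm:
  "permute_mat id swap23 (Hm a b c d) = Hm b a d c"
  "permute_mat swap23 id (Hm a b c d) = Hm c d a b"
  "permute_mat swap23 swap23 (Hm a b c d) = Hm d c b a"
  by (simp_all add: vec_eq_iff forall_3_from_0 Hm_def)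

theorem corollary1:
  fixes \<Omega> :: "'a::ring_1 mat3 \<Rightarrow> 'a mat3 option"
    and k :: int and a b c d :: 'a and M :: "'a mat3"
  assumes "\<Omega> = mpow Phi PhiInv k \<or> \<Omega> = mpow Psi PsiInv k"
    and "\<Omega> (Hm a b c d) = Some M"
  shows "\<exists>M1 M2 M3. \<Omega> (Hm b a d c) = Some M1 \<and> \<Omega> (Hm c d a b) = Some M2
           \<and> \<Omega> (Hm d c b a) = Some M3
           \<and> M = Hm (M$1$1) (M1$1$1) (M2$1$1) (M3$1$1)"
proof -
  have "perm_equivariant \<Omega>" "preserves_hatM \<Omega>"
    using assms(1) by (auto intro: perm_equivariant_mpow preserves_hatM_mpow
        perm_equivariant_Phi perm_equivariant_PhiInv perm_equivariant_Psi perm_equivariant_PsiInv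
        preserves_hatM_Phi preserves_hatM_PhiInv preserves_hatM_Psi preserves_hatM_PsiInv)
  then have permute: "\<Omega> (permute_mat p q (Hm a b c d)) = Some (permute_mat p q M)"
      if "zero_fixing_perm p" "zero_fixing_perm q" for p q
    using that assms(2) unfolding perm_equivariant_def by simp
  have "M = Hm (M$1$1) (M$1$2) (M$2$1) (M$2$2)"
    using \<open>preserves_hatM \<Omega>\<close> assms(2) hatM_Hm hatM_imp_eq_Hm unfolding preserves_hatM_def by blast
  then show ?thesis
    using permute[OF zero_fixing_perm_id zero_fixing_perm_swap23]
      permute[OF zero_fixing_perm_swap23 zero_fixing_perm_id]
      permute[OF zero_fixing_perm_swap23 zero_fixing_perm_swap23]
    by (simp add: permute_mat_swap23_Hm)
qed

end
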